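(* Let $k$ be an algebraically closed field with $\operatorname{char}(k)\neq 2$, and let $\alpha\in k$ satisfy $\alpha(1-\alpha^2)\neq 0$. Let $A(\alpha)$ be the $k$-algebra on degree-one generators $x_1,\dots,x_4$ with defining relations \[ x_3x_1+x_1x_3=0,\quad x_3x_2-x_2x_3=0,\quad 2x_2^2+\alpha x_3^2=x_1^2,\quad x_4x_1+x_1x_4=0,\quad x_2^2-x_4^2=0,\quad x_4x_2+x_2x_4=x_3^2 . \] Let $\mathfrak p\subset\mathbb P^3$ be the subscheme defined by the fifteen $4\times 4$ minors of the matrix \[ M=\begin{bmatrix} x_3 & 0 & x_1 & 0\\ 0 & -x_3 & x_2 & 0\\ x_4 & 0 & 0 & x_1\\ -x_1 & 2 x_2 & \alpha x_3 & 0\\ 0 & x_4 & -x_3 & x_2\\ 0 & x_2 & 0 & -x_4 \end{bmatrix}. \] Define the following sets of points $(\lambda_1,\lambda_2,\lambda_3,\lambda_4)\in\mathbb P^3$: $Z_0=\{e_1,e_2,e_3,e_4\}$ (the coordinate points); $Z_1=\{(\lambda_1,1,\lambda_3,1): \lambda_1^2=-2(1+\alpha),\ \lambda_3^2=2\}$; $Z_2=\{(\lambda_1,-1,\lambda_3,1): \lambda_1^2=-2(1-\alpha),\ \lambda_3^2=-2\}$; $Z_3=\{(\lambda_1,\lambda_2,0,1): \lambda_1^2=-2,\ \lambda_2^2=-1\}$; $Z_4=\{(0,\lambda_2,\lambda_3,1): \alpha\lambda_2^2+2\lambda_2+\alpha=0,\ \alpha\lambda_3^2=-2\lambda_2^2\}$.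 Then $\mathfrak p=\bigcup_{i=0}^4 Z_i$, and $\mathfrak p$ consists of exactly twenty distinct points, each of multiplicity one.
   Context: The relations of $A(\alpha)$ can be written as $Mx=0$ with $x=(x_1,\dots,x_4)^T$; $\mathfrak p$ is the projection to the first factor of the zero locus $\Gamma\subset\mathbb P^3\times\mathbb P^3$ of the six defining relations, where a quadratic element $\sum c_{ij}x_ix_j$ is evaluated at $(p,q)$ as $\sum c_{ij}p_iq_j$. *)

theory Defs
  imports "HOL-Computational_Algebra.Polynomial" "HOL-Combinatorics.Permutations"
begin

text \<open>Vectors in k^4 are functions nat => k supported on the indices 1..4
  (coordinates x_1..x_4 as in the paper).\<close>

definition pt :: "'a::zero \<Rightarrow> 'a \<Rightarrow> 'a \<Rightarrow> 'a \<Rightarrow> nat \<Rightarrow> 'a" where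
  "pt a b c d = (\<lambda>i. if i = 1 then a else if i = 2 then b else if i = 3 then c
                       else if i = 4 then d else 0)"

definition vecs4 :: "(nat \<Rightarrow> 'a::zero) set" where
  "vecs4 = {pt a b c d | a b c d. True}"

definition proj :: "(nat \<Rightarrow> 'a::field) \<Rightarrow> (nat \<Rightarrow> 'a) set" where
  "proj p = {(\<lambda>i. c * p i) | c. c \<noteq> 0}"

definition Mmat :: "'a::comm_ring_1 \<Rightarrow> (nat \<Rightarrow> 'a) \<Rightarrow> nat \<Rightarrow> nat \<Rightarrow> 'a" where
  "Mmat \<alpha> x i j =
    (if i = 1 then [x 3, 0, x 1, 0] ! (j - 1)
     else if i = 2 then [0, - x 3, x 2, 0] ! (j - 1)
     else if i = 3 then [x 4, 0, 0, x 1] ! (j - 1)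
     else if i = 4 then [- x 1, 2 * x 2, \<alpha> * x 3, 0] ! (j - 1)
     else if i = 5 then [0, x 4, - x 3, x 2] ! (j - 1)
     else [0, x 2, 0, - x 4] ! (j - 1))"

definition det4 :: "(nat \<Rightarrow> nat \<Rightarrow> 'a::comm_ring_1) \<Rightarrow> 'a" where
  "det4 A = (\<Sum>\<sigma> | \<sigma> permutes {0..<4}. of_int (sign \<sigma>) * (\<Prod>i<4. A i (\<sigma> i)))"

definition minor4 :: "'a::comm_ring_1 \<Rightarrow> (nat \<Rightarrow> 'a) \<Rightarrow> nat set \<Rightarrow> 'a" where
  "minor4 \<alpha> x R = det4 (\<lambda>i j. Mmat \<alpha> x (sorted_list_of_set R ! i) (j + 1))"

definition row_sets :: "nat set set" where
  "row_sets = {R. R \<subseteq> {1..6} \<and> card R = 4}"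

text \<open>Nonzero vectors of the affine cone over the subscheme defined by the 15 minors.\<close>
definition plocus :: "'a::field \<Rightarrow> (nat \<Rightarrow> 'a) set" where
  "plocus \<alpha> = {p \<in> vecs4. (\<exists>i\<in>{1..4}. p i \<noteq> 0) \<and> (\<forall>R \<in> row_sets. minor4 \<alpha> p R = 0)}"

text \<open>Directional derivative D_v of the minor polynomial at p: coefficient of t in
  minor(p + t v).\<close>
definition dminor :: "'a::field \<Rightarrow> (nat \<Rightarrow> 'a) \<Rightarrow> (nat \<Rightarrow> 'a) \<Rightarrow> nat set \<Rightarrow> 'a" where
  "dminor \<alpha> p v R = coeff (minor4 [:\<alpha>:] (\<lambda>i. [:p i, v i:]) R) 1"

text \<open>Multiplicity one at the point [p]: the Zariski tangent space of the affine cone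
  at p (kernel of the Jacobian of the minors) is just the line spanned by p, i.e. the
  tangent space of the subscheme at [p] is zero.\<close>
definition mult_one :: "'a::field \<Rightarrow> (nat \<Rightarrow> 'a) \<Rightarrow> bool" where
  "mult_one \<alpha> p \<longleftrightarrow>
     (\<forall>v \<in> vecs4. (\<forall>R \<in> row_sets. dminor \<alpha> p v R = 0) \<longrightarrow> (\<exists>c. v = (\<lambda>i. c * p i)))"

definition Z0 :: "(nat \<Rightarrow> 'a::field) set" where
  "Z0 = {pt 1 0 0 0, pt 0 1 0 0, pt 0 0 1 0, pt 0 0 0 1}"

definition Z1 :: "'a::field \<Rightarrow> (nat \<Rightarrow> 'a) set" where
  "Z1 \<alpha> = {pt l1 1 l3 1 | l1 l3. l1^2 = - 2 * (1 + \<alpha>) \<and> l3^2 = 2}"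

definition Z2 :: "'a::field \<Rightarrow> (nat \<Rightarrow> 'a) set" where
  "Z2 \<alpha> = {pt l1 (-1) l3 1 | l1 l3. l1^2 = - 2 * (1 - \<alpha>) \<and> l3^2 = - 2}"

definition Z3 :: "(nat \<Rightarrow> 'a::field) set" where
  "Z3 = {pt l1 l2 0 1 | l1 l2. l1^2 = - 2 \<and> l2^2 = - 1}"

definition Z4 :: "'a::field \<Rightarrow> (nat \<Rightarrow> 'a) set" where
  "Z4 \<alpha> = {pt 0 l2 l3 1 | l2 l3. \<alpha> * l2^2 + 2 * l2 + \<alpha> = 0 \<and> \<alpha> * l3^2 = - 2 * l2^2}"

end

theory Submission
  imports Defs
begin

(*
  The fifteen maximal minors of M are explicit quartics in x_1, ..., x_4.  Where x_4 = 0 they force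
  two of x_1, x_2, x_3 to vanish, leaving e_1, e_2, e_3.  On the chart x_4 = 1 a case split on
  whether x_1 and x_3 vanish solves them: if neither vanishes then x_2 = 1 or x_2 = -1 (the
  families Z_1 and Z_2), if only x_1 vanishes we get Z_4, if only x_3 vanishes we get Z_3, and
  x_1 = x_3 = 0 leaves e_4.  Over an algebraically closed field of characteristic not 2 each of
  Z_1, ..., Z_4 has four points, since all defining quadrics have nonzero discriminant (for Z_4,
  the discriminant of alpha t^2 + 2 t + alpha is 4 (1 - alpha^2)), and the five families are
  separated by their coordinates: 20 points in all.  The minors are homogeneous, so multiplicity
  one only needs to be checked at these twenty representatives, and at each of them three
  linearised minors already cut the tangent space of the cone down to the line through the point.
*)

section \<open>The maximal minors of M\<close>

lemma permutation_transpose_comp: "permutation q \<Longrightarrow> permutation (transpose a b \<circ> q)"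
  by (simp add: permutation_compose permutation_swap_id)

lemma sign_transpose_comp:
  "permutation q \<Longrightarrow> sign (transpose a b \<circ> q) = (if a = b then 1 else -1) * sign q"
  by (simp add: sign_compose permutation_swap_id sign_swap_id)

lemma det4_expand:
  fixes A :: "nat \<Rightarrow> nat \<Rightarrow> 'a::comm_ring_1"
  shows "det4 A =
     A 0 0 * A 1 1 * A 2 2 * A 3 3 - A 0 0 * A 1 1 * A 2 3 * A 3 2
   - A 0 0 * A 1 2 * A 2 1 * A 3 3 + A 0 0 * A 1 2 * A 2 3 * A 3 1
   + A 0 0 * A 1 3 * A 2 1 * A 3 2 - A 0 0 * A 1 3 * A 2 2 * A 3 1
   - A 0 1 * A 1 0 * A 2 2 * A 3 3 + A 0 1 * A 1 0 * A 2 3 * A 3 2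
   + A 0 1 * A 1 2 * A 2 0 * A 3 3 - A 0 1 * A 1 2 * A 2 3 * A 3 0
   - A 0 1 * A 1 3 * A 2 0 * A 3 2 + A 0 1 * A 1 3 * A 2 2 * A 3 0
   + A 0 2 * A 1 0 * A 2 1 * A 3 3 - A 0 2 * A 1 0 * A 2 3 * A 3 1
   - A 0 2 * A 1 1 * A 2 0 * A 3 3 + A 0 2 * A 1 1 * A 2 3 * A 3 0
   + A 0 2 * A 1 3 * A 2 0 * A 3 1 - A 0 2 * A 1 3 * A 2 1 * A 3 0
   - A 0 3 * A 1 0 * A 2 1 * A 3 2 + A 0 3 * A 1 0 * A 2 2 * A 3 1
   + A 0 3 * A 1 1 * A 2 0 * A 3 2 - A 0 3 * A 1 1 * A 2 2 * A 3 0
   - A 0 3 * A 1 2 * A 2 0 * A 3 1 + A 0 3 * A 1 2 * A 2 1 * A 3 0"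
proof -
  have "{0..<4::nat} = {0, 1, 2, 3}" by auto
  then have sum_perms: "sum f {\<sigma>. \<sigma> permutes {0..<4::nat}} =
     (\<Sum>b\<in>{0,1,2,3}. \<Sum>c\<in>{1,2,3}. \<Sum>d\<in>{2,3}.
        f (transpose 0 b \<circ> (transpose 1 c \<circ> (transpose 2 d \<circ> (transpose 3 3 \<circ> id)))))"
    for f :: "(nat \<Rightarrow> nat) \<Rightarrow> 'a"
    by (simp add: sum_over_permutations_insert)
  have prod4: "(\<Prod>i<4. g i) = g 0 * g 1 * g 2 * g 3" for g :: "nat \<Rightarrow> 'a"
    by (simp add: numeral_eq_Suc lessThan_Suc mult.commute mult.left_commute)
  show ?thesis
    unfolding det4_def sum_perms prod4
    by (simp add: sign_transpose_comp permutation_transpose_comp sign_swap_id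
        permutation_swap_id transpose_def algebra_simps)
qed

lemma det4_scale:
  assumes "\<And>i j. i < 4 \<Longrightarrow> j < 4 \<Longrightarrow> B i j = c * A i j"
  shows "det4 B = c ^ 4 * det4 A"
proof -
  have "(\<Prod>i<4. B i (\<sigma> i)) = c ^ 4 * (\<Prod>i<4. A i (\<sigma> i))" if "\<sigma> permutes {0..<4}" for \<sigma>
  proof -
    have "\<sigma> i < 4" if "i < 4" for i
      using permutes_in_image[OF \<open>\<sigma> permutes {0..<4}\<close>] that by simp
    then show ?thesis by (simp add: assms prod.distrib)
  qed
  then show ?thesis
    unfolding det4_def sum_distrib_left by (intro sum.cong) (simp_all add: algebra_simps)
qed

lemma Mmat_scale:
  "1 \<le> j \<Longrightarrow> j \<le> 4 \<Longrightarrow> Mmat \<alpha> (\<lambda>i. c * x i) r j = c * Mmat \<alpha> x r j"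
  by (auto simp: Mmat_def le_Suc_eq numeral_eq_Suc algebra_simps)

lemma minor4_scale: "minor4 \<alpha> (\<lambda>i. c * x i) R = c ^ 4 * minor4 \<alpha> x R"
  unfolding minor4_def by (rule det4_scale) (simp add: Mmat_scale)

lemma sorted_list_of_set_4:
  "a < b \<Longrightarrow> b < c \<Longrightarrow> c < d \<Longrightarrow> sorted_list_of_set {a, b, c, d::nat} = [a, b, c, d]"
  by (intro sorted_list_of_set_unique[THEN iffD1]) auto

lemma coeff_mult_1: "coeff (p * q) 1 = coeff p 0 * coeff q 1 + coeff p 1 * coeff q 0"
  by (simp add: coeff_mult atMost_Suc add.commute)

lemma minor4_explicit:
  fixes x :: "nat \<Rightarrow> 'a::comm_ring_1"
  shows "minor4 \<alpha> x {1,2,3,4} =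
      \<alpha> * x 1 * (x 3)^3 + (x 1)^3 * x 3 + 2 * x 1 * (x 2)^2 * x 3"
    and "minor4 \<alpha> x {1,2,3,5} =
      2 * x 1 * x 2 * x 3 * x 4 - x 1 * (x 3)^3"
    and "minor4 \<alpha> x {1,2,3,6} =
      x 1 * (x 2)^2 * x 3 - x 1 * x 3 * (x 4)^2"
    and "minor4 \<alpha> x {1,2,4,5} =
      - (\<alpha> * x 2 * (x 3)^3) - (x 1)^2 * x 2 * x 3 - 2 * (x 2)^3 * x 3"
    and "minor4 \<alpha> x {1,2,4,6} =
      \<alpha> * (x 3)^3 * x 4 + (x 1)^2 * x 3 * x 4 + 2 * (x 2)^2 * x 3 * x 4"
    and "minor4 \<alpha> x {1,2,5,6} =
      (x 2)^3 * x 3 + x 2 * x 3 * (x 4)^2 - (x 3)^3 * x 4"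
    and "minor4 \<alpha> x {1,3,4,5} =
      - (\<alpha> * x 1 * (x 3)^2 * x 4) - (x 1)^3 * x 4 + 2 * x 1 * (x 2)^2 * x 4
        - 2 * x 1 * x 2 * (x 3)^2"
    and "minor4 \<alpha> x {1,3,4,6} =
      - (\<alpha> * x 1 * x 2 * (x 3)^2) - (x 1)^3 * x 2 - 2 * x 1 * x 2 * (x 4)^2"
    and "minor4 \<alpha> x {1,3,5,6} =
      - (x 1 * (x 2)^2 * x 4) + x 1 * x 2 * (x 3)^2 - x 1 * (x 4)^3"
    and "minor4 \<alpha> x {1,4,5,6} =
      \<alpha> * (x 2)^2 * (x 3)^2 + \<alpha> * (x 3)^2 * (x 4)^2 + (x 1)^2 * (x 2)^2
        + (x 1)^2 * (x 4)^2 + 2 * x 2 * (x 3)^2 * x 4"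
    and "minor4 \<alpha> x {2,3,4,5} =
      \<alpha> * x 2 * (x 3)^2 * x 4 - (x 1)^2 * x 2 * x 4 + (x 1)^2 * (x 3)^2 + 2 * (x 2)^3 * x 4"
    and "minor4 \<alpha> x {2,3,4,6} =
      - (\<alpha> * (x 3)^2 * (x 4)^2) - (x 1)^2 * (x 2)^2 - 2 * (x 2)^2 * (x 4)^2"
    and "minor4 \<alpha> x {2,3,5,6} =
      - ((x 2)^3 * x 4) - x 2 * (x 4)^3 + (x 3)^2 * (x 4)^2"
    and "minor4 \<alpha> x {2,4,5,6} =
      x 1 * (x 2)^3 + x 1 * x 2 * (x 4)^2 - x 1 * (x 3)^2 * x 4"
    and "minor4 \<alpha> x {3,4,5,6} =
      \<alpha> * (x 2)^2 * x 3 * x 4 + \<alpha> * x 3 * (x 4)^3 + (x 1)^2 * x 2 * x 3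
        + 2 * x 2 * x 3 * (x 4)^2"
  by (simp_all add: minor4_def sorted_list_of_set_4 det4_expand Mmat_def
      algebra_simps power2_eq_square power3_eq_cube)

lemma dminor_explicit:
  fixes p v :: "nat \<Rightarrow> 'a::field"
  shows "dminor \<alpha> p v {1,2,3,4} =
      3 * \<alpha> * p 1 * (p 3)^2 * v 3 + \<alpha> * (p 3)^3 * v 1 + (p 1)^3 * v 3
        + 3 * (p 1)^2 * p 3 * v 1 + 2 * p 1 * (p 2)^2 * v 3 + 4 * p 1 * p 2 * p 3 * v 2
        + 2 * (p 2)^2 * p 3 * v 1"
    and "dminor \<alpha> p v {1,2,3,5} =
      2 * p 1 * p 2 * p 3 * v 4 + 2 * p 1 * p 2 * p 4 * v 3 - 3 * p 1 * (p 3)^2 * v 3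
        + 2 * p 1 * p 3 * p 4 * v 2 + 2 * p 2 * p 3 * p 4 * v 1 - (p 3)^3 * v 1"
    and "dminor \<alpha> p v {1,2,3,6} =
      p 1 * (p 2)^2 * v 3 + 2 * p 1 * p 2 * p 3 * v 2 - 2 * p 1 * p 3 * p 4 * v 4
        - p 1 * (p 4)^2 * v 3 + (p 2)^2 * p 3 * v 1 - p 3 * (p 4)^2 * v 1"
    and "dminor \<alpha> p v {1,2,4,5} =
      - (3 * \<alpha> * p 2 * (p 3)^2 * v 3) - \<alpha> * (p 3)^3 * v 2 - (p 1)^2 * p 2 * v 3
        - (p 1)^2 * p 3 * v 2 - 2 * p 1 * p 2 * p 3 * v 1 - 2 * (p 2)^3 * v 3
        - 6 * (p 2)^2 * p 3 * v 2"
    and "dminor \<alpha> p v {1,2,4,6} =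
      \<alpha> * (p 3)^3 * v 4 + 3 * \<alpha> * (p 3)^2 * p 4 * v 3 + (p 1)^2 * p 3 * v 4
        + (p 1)^2 * p 4 * v 3 + 2 * p 1 * p 3 * p 4 * v 1 + 2 * (p 2)^2 * p 3 * v 4
        + 2 * (p 2)^2 * p 4 * v 3 + 4 * p 2 * p 3 * p 4 * v 2"
    and "dminor \<alpha> p v {1,2,5,6} =
      (p 2)^3 * v 3 + 3 * (p 2)^2 * p 3 * v 2 + 2 * p 2 * p 3 * p 4 * v 4 + p 2 * (p 4)^2 * v 3
        - (p 3)^3 * v 4 - 3 * (p 3)^2 * p 4 * v 3 + p 3 * (p 4)^2 * v 2"
    and "dminor \<alpha> p v {1,3,4,5} =
      - (\<alpha> * p 1 * (p 3)^2 * v 4) - 2 * \<alpha> * p 1 * p 3 * p 4 * v 3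
        - \<alpha> * (p 3)^2 * p 4 * v 1 - (p 1)^3 * v 4 - 3 * (p 1)^2 * p 4 * v 1
        + 2 * p 1 * (p 2)^2 * v 4 - 4 * p 1 * p 2 * p 3 * v 3 + 4 * p 1 * p 2 * p 4 * v 2
        - 2 * p 1 * (p 3)^2 * v 2 + 2 * (p 2)^2 * p 4 * v 1 - 2 * p 2 * (p 3)^2 * v 1"
    and "dminor \<alpha> p v {1,3,4,6} =
      - (2 * \<alpha> * p 1 * p 2 * p 3 * v 3) - \<alpha> * p 1 * (p 3)^2 * v 2
        - \<alpha> * p 2 * (p 3)^2 * v 1 - (p 1)^3 * v 2 - 3 * (p 1)^2 * p 2 * v 1
        - 4 * p 1 * p 2 * p 4 * v 4 - 2 * p 1 * (p 4)^2 * v 2 - 2 * p 2 * (p 4)^2 * v 1"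
    and "dminor \<alpha> p v {1,3,5,6} =
      - (p 1 * (p 2)^2 * v 4) + 2 * p 1 * p 2 * p 3 * v 3 - 2 * p 1 * p 2 * p 4 * v 2
        + p 1 * (p 3)^2 * v 2 - 3 * p 1 * (p 4)^2 * v 4 - (p 2)^2 * p 4 * v 1
        + p 2 * (p 3)^2 * v 1 - (p 4)^3 * v 1"
    and "dminor \<alpha> p v {1,4,5,6} =
      2 * \<alpha> * (p 2)^2 * p 3 * v 3 + 2 * \<alpha> * p 2 * (p 3)^2 * v 2
        + 2 * \<alpha> * (p 3)^2 * p 4 * v 4 + 2 * \<alpha> * p 3 * (p 4)^2 * v 3
        + 2 * (p 1)^2 * p 2 * v 2 + 2 * (p 1)^2 * p 4 * v 4 + 2 * p 1 * (p 2)^2 * v 1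
        + 2 * p 1 * (p 4)^2 * v 1 + 2 * p 2 * (p 3)^2 * v 4 + 4 * p 2 * p 3 * p 4 * v 3
        + 2 * (p 3)^2 * p 4 * v 2"
    and "dminor \<alpha> p v {2,3,4,5} =
      \<alpha> * p 2 * (p 3)^2 * v 4 + 2 * \<alpha> * p 2 * p 3 * p 4 * v 3
        + \<alpha> * (p 3)^2 * p 4 * v 2 - (p 1)^2 * p 2 * v 4 + 2 * (p 1)^2 * p 3 * v 3
        - (p 1)^2 * p 4 * v 2 - 2 * p 1 * p 2 * p 4 * v 1 + 2 * p 1 * (p 3)^2 * v 1
        + 2 * (p 2)^3 * v 4 + 6 * (p 2)^2 * p 4 * v 2"
    and "dminor \<alpha> p v {2,3,4,6} =
      - (2 * \<alpha> * (p 3)^2 * p 4 * v 4) - 2 * \<alpha> * p 3 * (p 4)^2 * v 3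
        - 2 * (p 1)^2 * p 2 * v 2 - 2 * p 1 * (p 2)^2 * v 1 - 4 * (p 2)^2 * p 4 * v 4
        - 4 * p 2 * (p 4)^2 * v 2"
    and "dminor \<alpha> p v {2,3,5,6} =
      - ((p 2)^3 * v 4) - 3 * (p 2)^2 * p 4 * v 2 - 3 * p 2 * (p 4)^2 * v 4
        + 2 * (p 3)^2 * p 4 * v 4 + 2 * p 3 * (p 4)^2 * v 3 - (p 4)^3 * v 2"
    and "dminor \<alpha> p v {2,4,5,6} =
      3 * p 1 * (p 2)^2 * v 2 + 2 * p 1 * p 2 * p 4 * v 4 - p 1 * (p 3)^2 * v 4
        - 2 * p 1 * p 3 * p 4 * v 3 + p 1 * (p 4)^2 * v 2 + (p 2)^3 * v 1 + p 2 * (p 4)^2 * v 1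
        - (p 3)^2 * p 4 * v 1"
    and "dminor \<alpha> p v {3,4,5,6} =
      \<alpha> * (p 2)^2 * p 3 * v 4 + \<alpha> * (p 2)^2 * p 4 * v 3
        + 2 * \<alpha> * p 2 * p 3 * p 4 * v 2 + 3 * \<alpha> * p 3 * (p 4)^2 * v 4
        + \<alpha> * (p 4)^3 * v 3 + (p 1)^2 * p 2 * v 3 + (p 1)^2 * p 3 * v 2
        + 2 * p 1 * p 2 * p 3 * v 1 + 4 * p 2 * p 3 * p 4 * v 4 + 2 * p 2 * (p 4)^2 * v 3
        + 2 * p 3 * (p 4)^2 * v 2"
  unfolding dminor_def minor4_explicit
  by (simp_all add: coeff_mult_1 numeral_poly
      power2_eq_square power3_eq_cube algebra_simps)

section \<open>The reduced locus\<close>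

lemma row_sets_explicit:
  "row_sets =
    {{1,2,3,4}, {1,2,3,5}, {1,2,3,6}, {1,2,4,5}, {1,2,4,6}, {1,2,5,6}, {1,3,4,5}, {1,3,4,6},
     {1,3,5,6}, {1,4,5,6}, {2,3,4,5}, {2,3,4,6}, {2,3,5,6}, {2,4,5,6}, {3,4,5,6}}"
  (is "_ = ?R")
proof -
  have "{1..6::nat} = {1,2,3,4,5,6}" by auto
  then have row_sets_Pow: "row_sets = {R \<in> Pow {1,2,3,4,5,6}. card R = 4}"
    unfolding row_sets_def by auto
  have in_R: "R \<in> ?R" if "R \<in> Pow {1,2,3,4,5,6}" "card R = 4" for R :: "nat set"
    using that unfolding Pow_insert
    apply (simp add: insert_commute)
    apply (elim disjE)
    by (simp_all add: card_insert_if insert_commute)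
  then have "{R \<in> Pow {1,2,3,4,5,6}. card R = 4} \<subseteq> ?R"
    by (intro subsetI, elim CollectE conjE) (rule in_R)
  moreover have "?R \<subseteq> {R \<in> Pow {1,2,3,4,5,6}. card R = 4}" by simp
  ultimately show ?thesis unfolding row_sets_Pow by (rule subset_antisym)
qed

lemma ball_row_sets:
  "(\<forall>R\<in>row_sets. P R) \<longleftrightarrow>
    P {1,2,3,4} \<and> P {1,2,3,5} \<and> P {1,2,3,6} \<and> P {1,2,4,5} \<and> P {1,2,4,6} \<and> P {1,2,5,6} \<and>
    P {1,3,4,5} \<and> P {1,3,4,6} \<and> P {1,3,5,6} \<and> P {1,4,5,6} \<and> P {2,3,4,5} \<and> P {2,3,4,6} \<and>
    P {2,3,5,6} \<and> P {2,4,5,6} \<and> P {3,4,5,6}"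
  unfolding row_sets_explicit by simp

lemma ball_row_setsD:
  assumes "\<forall>R\<in>row_sets. P R"
  shows "P {1,2,3,4}" "P {1,2,3,5}" "P {1,2,3,6}" "P {1,2,4,5}" "P {1,2,4,6}" "P {1,2,5,6}"
    "P {1,3,4,5}" "P {1,3,4,6}" "P {1,3,5,6}" "P {1,4,5,6}" "P {2,3,4,5}" "P {2,3,4,6}"
    "P {2,3,5,6}" "P {2,4,5,6}" "P {3,4,5,6}"
  using assms unfolding ball_row_sets by blast+

lemma pt_apply [simp]:
  "pt a b c d 1 = a" "pt a b c d 2 = b" "pt a b c d 3 = c" "pt a b c d 4 = d"
  "pt a b c d (Suc 0) = a"
  by (simp_all add: pt_def)

lemma pt_eq_iff: "pt a b c d = pt a' b' c' d' \<longleftrightarrow> a = a' \<and> b = b' \<and> c = c' \<and> d = d'"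
  by (metis pt_apply(1-4))

lemma scale_pt: "(\<lambda>i. (k::'a::mult_zero) * pt a b c d i) = pt (k * a) (k * b) (k * c) (k * d)"
  unfolding pt_def by (rule ext) simp

lemma vecs4_iff: "v \<in> vecs4 \<longleftrightarrow> (\<exists>a b c d. v = pt a b c d)"
  unfolding vecs4_def by blast

abbreviation Zunion :: "'a::field \<Rightarrow> (nat \<Rightarrow> 'a) set" where
  "Zunion \<alpha> \<equiv> Z0 \<union> Z1 \<alpha> \<union> Z2 \<alpha> \<union> Z3 \<union> Z4 \<alpha>"

lemma pt_in_plocus_iff:
  "pt a b c d \<in> plocus \<alpha> \<longleftrightarrow>
     (a \<noteq> 0 \<or> b \<noteq> 0 \<or> c \<noteq> 0 \<or> d \<noteq> 0) \<and> (\<forall>R\<in>row_sets. minor4 \<alpha> (pt a b c d) R = 0)"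
proof -
  have "{1..4::nat} = {1,2,3,4}" by auto
  then have "(\<exists>i\<in>{1..4}. pt a b c d i \<noteq> 0) \<longleftrightarrow> a \<noteq> 0 \<or> b \<noteq> 0 \<or> c \<noteq> 0 \<or> d \<noteq> 0"
    by simp
  then show ?thesis unfolding plocus_def vecs4_iff by blast
qed

(* Points of the chart x_4 = 1 are handled as pt a b c d with side equations such as d = 1
   rather than with literal entries 1, which break the ring normaliser behind algebra. *)
lemma pt_affine_in_plocus_iff:
  "d = 1 \<Longrightarrow> pt a b c d \<in> plocus \<alpha> \<longleftrightarrow> (\<forall>R\<in>row_sets. minor4 \<alpha> (pt a b c d) R = 0)"
  by (simp add: pt_in_plocus_iff)

lemma Zunion_subset_plocus:
  assumes "\<alpha> \<noteq> 0"
  shows "Zunion \<alpha> \<subseteq> plocus \<alpha>"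
proof
  fix p assume "p \<in> Zunion \<alpha>"
  then consider (Z0) "p \<in> Z0"
    | (Z1) a b c d where "p = pt a b c d" "a^2 = -2 * (1 + \<alpha>)" "b = 1" "c^2 = 2" "d = 1"
    | (Z2) a b c d where "p = pt a b c d" "a^2 = -2 * (1 - \<alpha>)" "b = -1" "c^2 = -2" "d = 1"
    | (Z3) a b c d where "p = pt a b c d" "a^2 = -2" "b^2 = -1" "c = 0" "d = 1"
    | (Z4) a b c d where
        "p = pt a b c d" "a = 0" "\<alpha> * b^2 + 2 * b + \<alpha> = 0" "\<alpha> * c^2 = -2 * b^2" "d = 1"
    unfolding Z1_def Z2_def Z3_def Z4_def by blast
  then show "p \<in> plocus \<alpha>"
  proof cases
    case Z0
    then show ?thesis
      unfolding Z0_def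
      by (elim insertE emptyE; simp only: pt_in_plocus_iff ball_row_sets
          minor4_explicit pt_apply) simp_all
  next
    case Z1
    show ?thesis
      unfolding Z1(1) pt_affine_in_plocus_iff[OF Z1(5)] ball_row_sets
        minor4_explicit pt_apply
      using Z1(2-5) by - (intro conjI; algebra)
  next
    case Z2
    show ?thesis
      unfolding Z2(1) pt_affine_in_plocus_iff[OF Z2(5)] ball_row_sets
        minor4_explicit pt_apply
      using Z2(2-5) by - (intro conjI; algebra)
  next
    case Z3
    show ?thesis
      unfolding Z3(1) pt_affine_in_plocus_iff[OF Z3(5)] ball_row_sets
        minor4_explicit pt_apply
      using Z3(2-5) by - (intro conjI; algebra)
  next
    case Z4
    show ?thesis
      unfolding Z4(1) pt_affine_in_plocus_iff[OF Z4(5)] ball_row_sets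
        minor4_explicit pt_apply
      using assms Z4(2-5) by - (intro conjI; algebra)
  qed
qed

lemma minors_vanish_at_infinity:
  assumes minors: "\<forall>R\<in>row_sets. minor4 (\<alpha>::'a::field) (pt a b c d) R = 0"
    and "d = 0" "\<alpha> \<noteq> 0"
  shows "(b = 0 \<and> c = 0) \<or> (a = 0 \<and> c = 0) \<or> (a = 0 \<and> b = 0)"
proof -
  note eqs = ball_row_setsD[OF minors, unfolded minor4_explicit pt_apply]
  have "a * c^3 = 0" using eqs \<open>d = 0\<close> by algebra
  moreover have "b^2 * (\<alpha> * c^2 + a^2) = 0" using eqs \<open>d = 0\<close> by algebra
  ultimately show ?thesis using \<open>\<alpha> \<noteq> 0\<close> by auto
qed

lemma affine_point_in_Z1_or_Z2:
  assumes "(2::'a::field) \<noteq> 0" "b^2 = 1" "c^2 = 2 * b" "\<alpha> * c^2 + a^2 + 2 * b^2 = 0" "d = 1"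
  shows "pt a b c d \<in> Z1 \<alpha> \<union> Z2 \<alpha>"
proof -
  from \<open>b^2 = 1\<close> consider "b = 1" | "b = -1" by (auto simp: power2_eq_1_iff)
  then show ?thesis
  proof cases
    case 1
    have "a^2 = -2 * (1 + \<alpha>)" "c^2 = 2" using assms(3,4) 1 by algebra+
    then show ?thesis unfolding Z1_def 1 \<open>d = 1\<close> by blast
  next
    case 2
    have "a^2 = -2 * (1 - \<alpha>)" "c^2 = -2" using assms(3,4) 2 by algebra+
    then show ?thesis unfolding Z2_def 2 \<open>d = 1\<close> by blast
  qed
qed

lemma minors_vanish_affine_chart:
  assumes minors: "\<forall>R\<in>row_sets. minor4 (\<alpha>::'a::field) (pt a b c d) R = 0"
    and "d = 1" and two: "(2::'a::field) \<noteq> 0"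
  shows "pt a b c d \<in> Zunion \<alpha>"
proof -
  note eqs = ball_row_setsD[OF minors, unfolded minor4_explicit pt_apply]
  have quad: "\<alpha> * c^2 * (b^2 + 1) + a^2 * (b^2 + 1) + 2 * b * c^2 = 0"
    using eqs \<open>d = 1\<close> by algebra
  consider "a \<noteq> 0" "c \<noteq> 0" | "a = 0" "c \<noteq> 0" | "a \<noteq> 0" "c = 0" | "a = 0" "c = 0"
    by blast
  then show ?thesis
  proof cases
    case 1
    have "a * c * (b^2 - 1) = 0" "a * c * (2 * b - c^2) = 0"
      "a * c * (\<alpha> * c^2 + a^2 + 2 * b^2) = 0"
      using eqs \<open>d = 1\<close> by algebra+
    with 1 have "b^2 = 1" "c^2 = 2 * b" "\<alpha> * c^2 + a^2 + 2 * b^2 = 0" by auto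
    then show ?thesis using affine_point_in_Z1_or_Z2 two \<open>d = 1\<close> by blast
  next
    case 2
    have "c * (\<alpha> * c^2 + 2 * b^2) = 0" using eqs \<open>a = 0\<close> \<open>d = 1\<close> by algebra
    moreover have "c^2 * (\<alpha> * b^2 + 2 * b + \<alpha>) = 0" using quad \<open>a = 0\<close> by algebra
    ultimately have "\<alpha> * c^2 = -2 * b^2" "\<alpha> * b^2 + 2 * b + \<alpha> = 0"
      using \<open>c \<noteq> 0\<close> by (auto simp: eq_neg_iff_add_eq_0)
    then show ?thesis unfolding Z4_def \<open>a = 0\<close> \<open>d = 1\<close> by blast
  next
    case 3
    have "a^2 * (b^2 + 1) = 0" using quad \<open>c = 0\<close> by algebra
    with \<open>a \<noteq> 0\<close> have "b^2 = -1" by (simp add: eq_neg_iff_add_eq_0)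
    have "a * (2 * b^2 - a^2) = 0" using eqs \<open>c = 0\<close> \<open>d = 1\<close> by algebra
    with \<open>a \<noteq> 0\<close> \<open>b^2 = -1\<close> have "a^2 = -2" by simp
    with \<open>b^2 = -1\<close> show ?thesis unfolding Z3_def \<open>c = 0\<close> \<open>d = 1\<close> by blast
  next
    case 4
    have "2 * b^3 = 0" using eqs 4 \<open>d = 1\<close> by algebra
    with two have "b = 0" by simp
    with 4 show ?thesis unfolding Z0_def \<open>d = 1\<close> by blast
  qed
qed

lemma plocus_normal_form:
  fixes \<alpha> :: "'a::field"
  assumes "p \<in> plocus \<alpha>" "\<alpha> \<noteq> 0" "(2::'a) \<noteq> 0"
  obtains k q where "k \<noteq> 0" "q \<in> Zunion \<alpha>" "p = (\<lambda>i. k * q i)"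
proof -
  from assms(1) obtain a b c d where p: "p = pt a b c d"
    unfolding plocus_def vecs4_iff by blast
  from assms(1) have nonzero: "a \<noteq> 0 \<or> b \<noteq> 0 \<or> c \<noteq> 0 \<or> d \<noteq> 0"
    and minors: "\<forall>R\<in>row_sets. minor4 \<alpha> (pt a b c d) R = 0"
    unfolding p pt_in_plocus_iff by blast+
  show ?thesis
  proof (cases "d = 0")
    case False
    let ?q = "pt (a / d) (b / d) (c / d) 1"
    have q: "?q = (\<lambda>i. (1 / d) * pt a b c d i)" unfolding scale_pt using False by simp
    have "\<forall>R\<in>row_sets. minor4 \<alpha> ?q R = 0" using minors unfolding q minor4_scale by simp
    then have "?q \<in> Zunion \<alpha>" using minors_vanish_affine_chart[OF _ refl assms(3)] by blast
    moreover have "p = (\<lambda>i. d * ?q i)" unfolding p scale_pt using False by simp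
    ultimately show ?thesis using False that by blast
  next
    case True
    from minors_vanish_at_infinity[OF minors True assms(2)]
    consider "b = 0" "c = 0" | "a = 0" "c = 0" | "a = 0" "b = 0" by blast
    then show ?thesis
    proof cases
      case 1
      then show ?thesis
        using nonzero True by (intro that[of a "pt 1 0 0 0"]) (simp_all add: Z0_def p scale_pt)
    next
      case 2
      then show ?thesis
        using nonzero True by (intro that[of b "pt 0 1 0 0"]) (simp_all add: Z0_def p scale_pt)
    next
      case 3
      then show ?thesis
        using nonzero True by (intro that[of c "pt 0 0 1 0"]) (simp_all add: Z0_def p scale_pt)
    qed
  qed
qed

lemma proj_scale:
  assumes "k \<noteq> 0"
  shows "proj (\<lambda>i. k * q i) = proj q"
proof (intro equalityI subsetI)
  fix x assume "x \<in> proj (\<lambda>i. k * q i)"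
  then obtain c where "c \<noteq> 0" "x = (\<lambda>i. c * (k * q i))" unfolding proj_def by blast
  then have "c * k \<noteq> 0" "x = (\<lambda>i. (c * k) * q i)" using assms by (simp_all add: mult.assoc)
  then show "x \<in> proj q" unfolding proj_def by blast
next
  fix x assume "x \<in> proj q"
  then obtain c where "c \<noteq> 0" "x = (\<lambda>i. c * q i)" unfolding proj_def by blast
  then have "c / k \<noteq> 0" "x = (\<lambda>i. (c / k) * (k * q i))" using assms by simp_all
  then show "x \<in> proj (\<lambda>i. k * q i)" unfolding proj_def by blast
qed

lemma proj_plocus_eq:
  fixes \<alpha> :: "'a::field"
  assumes "\<alpha> \<noteq> 0" "(2::'a) \<noteq> 0"
  shows "proj ` plocus \<alpha> = proj ` Zunion \<alpha>"
proof
  show "proj ` plocus \<alpha> \<subseteq> proj ` Zunion \<alpha>"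
  proof
    fix x assume "x \<in> proj ` plocus \<alpha>"
    then obtain p where x: "x = proj p" and "p \<in> plocus \<alpha>" by blast
    then obtain k q where "k \<noteq> 0" "q \<in> Zunion \<alpha>" "p = (\<lambda>i. k * q i)"
      using plocus_normal_form assms by blast
    then show "x \<in> proj ` Zunion \<alpha>" unfolding x by (simp add: proj_scale)
  qed
  show "proj ` Zunion \<alpha> \<subseteq> proj ` plocus \<alpha>"
    using Zunion_subset_plocus[OF assms(1)] by blast
qed

section \<open>Counting the points\<close>

lemma neg_two_times_nonzero: "(2::'a::field) \<noteq> 0 \<Longrightarrow> x \<noteq> 0 \<Longrightarrow> -2 * x \<noteq> (0::'a)"
  by simp

lemma card_square_roots:
  fixes c :: "'a::field"
  assumes alg_closed: "\<forall>q :: 'a poly. degree q \<noteq> 0 \<longrightarrow> (\<exists>x. poly q x = 0)"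
    and two: "(2::'a) \<noteq> 0" and "c \<noteq> 0"
  shows "card {x. x^2 = c} = 2"
proof -
  have "degree [:-c, 0, 1:] \<noteq> 0" by simp
  with alg_closed obtain s where "poly [:-c, 0, 1:] s = 0" by blast
  then have s: "s^2 = c" by (simp add: power2_eq_square algebra_simps)
  then have "{x. x^2 = c} = {s, -s}" by (auto simp: power2_eq_iff)
  moreover have "s \<noteq> -s"
  proof
    assume "s = -s"
    then have "2 * s = 0" by simp
    with two s \<open>c \<noteq> 0\<close> show False by auto
  qed
  ultimately show ?thesis by simp
qed

lemma card_reciprocal_quadratic_roots:
  fixes \<alpha> :: "'a::field"
  assumes alg_closed: "\<forall>q :: 'a poly. degree q \<noteq> 0 \<longrightarrow> (\<exists>x. poly q x = 0)"
    and "(2::'a) \<noteq> 0" "\<alpha> \<noteq> 0" "\<alpha>^2 \<noteq> 1"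
  shows "card {x. \<alpha> * x^2 + 2 * x + \<alpha> = 0} = 2"
proof -
  have complete_square: "\<alpha> * x^2 + 2 * x + \<alpha> = 0 \<longleftrightarrow> (\<alpha> * x + 1)^2 = 1 - \<alpha>^2" for x
  proof -
    have "(\<alpha> * x + 1)^2 - (1 - \<alpha>^2) = \<alpha> * (\<alpha> * x^2 + 2 * x + \<alpha>)" by algebra
    then show ?thesis using \<open>\<alpha> \<noteq> 0\<close> by (metis eq_iff_diff_eq_0 mult_eq_0_iff)
  qed
  have "{x. \<alpha> * x^2 + 2 * x + \<alpha> = 0} = (\<lambda>y. (y - 1) / \<alpha>) ` {y. y^2 = 1 - \<alpha>^2}"
  proof (intro equalityI subsetI)
    fix x assume "x \<in> {x. \<alpha> * x^2 + 2 * x + \<alpha> = 0}"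
    then have "\<alpha> * x + 1 \<in> {y. y^2 = 1 - \<alpha>^2}" using complete_square by simp
    moreover have "x = ((\<alpha> * x + 1) - 1) / \<alpha>" using \<open>\<alpha> \<noteq> 0\<close> by simp
    ultimately show "x \<in> (\<lambda>y. (y - 1) / \<alpha>) ` {y. y^2 = 1 - \<alpha>^2}" by blast
  next
    fix x assume "x \<in> (\<lambda>y. (y - 1) / \<alpha>) ` {y. y^2 = 1 - \<alpha>^2}"
    then obtain y where "y^2 = 1 - \<alpha>^2" "x = (y - 1) / \<alpha>" by blast
    then have "(\<alpha> * x + 1)^2 = 1 - \<alpha>^2" using \<open>\<alpha> \<noteq> 0\<close> by simp
    then show "x \<in> {x. \<alpha> * x^2 + 2 * x + \<alpha> = 0}" using complete_square by simp
  qed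
  moreover have "inj_on (\<lambda>y. (y - 1) / \<alpha>) {y. y^2 = 1 - \<alpha>^2}"
    using \<open>\<alpha> \<noteq> 0\<close> by (auto simp: inj_on_def)
  moreover have "card {y. y^2 = 1 - \<alpha>^2} = 2"
    using \<open>\<alpha>^2 \<noteq> 1\<close> by (intro card_square_roots assms) simp
  ultimately show ?thesis by (simp add: card_image)
qed

lemma card_Sigma_constant:
  assumes "finite A" "0 < n" "\<And>x. x \<in> A \<Longrightarrow> card (B x) = n"
  shows "card (Sigma A B) = card A * n"
proof -
  have "finite (B x)" if "x \<in> A" for x
    using assms(2) assms(3)[OF that] by (intro card_ge_0_finite) simp
  then show ?thesis using assms by simp
qed

lemma card_image_Sigma_2_2:
  assumes "inj_on f (Sigma A B)" "card A = 2" "\<And>x. x \<in> A \<Longrightarrow> card (B x) = 2"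
  shows "card (f ` Sigma A B) = 4"
proof -
  have "finite A" using \<open>card A = 2\<close> by (intro card_ge_0_finite) simp
  then have "card (Sigma A B) = card A * 2"
    by (rule card_Sigma_constant) (simp_all add: assms(3))
  then show ?thesis using assms(1,2) by (simp add: card_image)
qed

context
  fixes \<alpha> :: "'a::field"
  assumes alg_closed: "\<forall>q :: 'a poly. degree q \<noteq> 0 \<longrightarrow> (\<exists>x. poly q x = 0)"
    and two: "(2::'a) \<noteq> 0"
begin

lemma card_Z1:
  assumes "1 + \<alpha> \<noteq> 0"
  shows "card (Z1 \<alpha>) = 4"
proof -
  have "Z1 \<alpha> = (\<lambda>(x, y). pt x 1 y 1) ` ({x. x^2 = -2 * (1 + \<alpha>)} \<times> {y. y^2 = 2})"
    unfolding Z1_def by auto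
  also have "card \<dots> = 4"
    using neg_two_times_nonzero[OF two assms] two
    by (intro card_image_Sigma_2_2 card_square_roots alg_closed) (auto simp: inj_on_def pt_eq_iff)
  finally show ?thesis .
qed

lemma card_Z2:
  assumes "1 - \<alpha> \<noteq> 0"
  shows "card (Z2 \<alpha>) = 4"
proof -
  have "Z2 \<alpha> = (\<lambda>(x, y). pt x (-1) y 1) ` ({x. x^2 = -2 * (1 - \<alpha>)} \<times> {y. y^2 = -2})"
    unfolding Z2_def by auto
  also have "card \<dots> = 4"
    using neg_two_times_nonzero[OF two assms] two
    by (intro card_image_Sigma_2_2 card_square_roots alg_closed) (auto simp: inj_on_def pt_eq_iff)
  finally show ?thesis .
qed

lemma card_Z3: "card (Z3 :: (nat \<Rightarrow> 'a) set) = 4"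
proof -
  have "(Z3 :: (nat \<Rightarrow> 'a) set) = (\<lambda>(x, y). pt x y 0 1) ` ({x. x^2 = -2} \<times> {y. y^2 = -1})"
    unfolding Z3_def by auto
  also have "card \<dots> = 4"
    using two by (intro card_image_Sigma_2_2 card_square_roots alg_closed)
      (auto simp: inj_on_def pt_eq_iff)
  finally show ?thesis .
qed

lemma card_Z4:
  assumes "\<alpha> \<noteq> 0" "\<alpha>^2 \<noteq> 1"
  shows "card (Z4 \<alpha>) = 4"
proof -
  have "\<alpha> * y^2 = -2 * x^2 \<longleftrightarrow> y^2 = -2 * x^2 / \<alpha>" for x y :: 'a
    using \<open>\<alpha> \<noteq> 0\<close> by (auto simp: field_simps)
  then have "Z4 \<alpha> = (\<lambda>(x, y). pt 0 x y 1) `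
      (SIGMA x:{x. \<alpha> * x^2 + 2 * x + \<alpha> = 0}. {y. y^2 = -2 * x^2 / \<alpha>})"
    unfolding Z4_def by auto
  also have "card \<dots> = 4"
  proof (intro card_image_Sigma_2_2 card_reciprocal_quadratic_roots card_square_roots
      alg_closed two assms)
    fix x assume "x \<in> {x. \<alpha> * x^2 + 2 * x + \<alpha> = 0}"
    then have "x \<noteq> 0" using \<open>\<alpha> \<noteq> 0\<close> by auto
    then show "-2 * x^2 / \<alpha> \<noteq> 0" using \<open>\<alpha> \<noteq> 0\<close> two by simp
  qed (auto simp: inj_on_def pt_eq_iff)
  finally show ?thesis .
qed

end

lemma Z_coordinates:
  fixes \<alpha> :: "'a::field"
  assumes "(2::'a) \<noteq> 0" "\<alpha> \<noteq> 0" "1 + \<alpha> \<noteq> 0" "1 - \<alpha> \<noteq> 0"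
  shows "p \<in> Z0 \<Longrightarrow> p 4 = 0 \<or> p = pt 0 0 0 1"
    and "p \<in> Z1 \<alpha> \<Longrightarrow> p 4 = 1 \<and> p 2 = 1 \<and> p 1 \<noteq> 0 \<and> p 3 \<noteq> 0"
    and "p \<in> Z2 \<alpha> \<Longrightarrow> p 4 = 1 \<and> p 2 = -1 \<and> p 1 \<noteq> 0 \<and> p 3 \<noteq> 0"
    and "p \<in> Z3 \<Longrightarrow> p 4 = 1 \<and> p 3 = 0 \<and> p 1 \<noteq> 0"
    and "p \<in> Z4 \<alpha> \<Longrightarrow> p 4 = 1 \<and> p 1 = 0 \<and> p 2 \<noteq> 0"
proof -
  note nonzero = neg_two_times_nonzero[OF assms(1) assms(3)]
    neg_two_times_nonzero[OF assms(1) assms(4)]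
  have "(-2::'a) \<noteq> 0" using assms(1) by simp
  have root_nonzero: "x \<noteq> 0" if "x^2 = c" "c \<noteq> 0" for x c :: 'a
    using that by auto
  show "p \<in> Z0 \<Longrightarrow> p 4 = 0 \<or> p = pt 0 0 0 1"
    unfolding Z0_def by auto
  show "p \<in> Z1 \<alpha> \<Longrightarrow> p 4 = 1 \<and> p 2 = 1 \<and> p 1 \<noteq> 0 \<and> p 3 \<noteq> 0"
    unfolding Z1_def using root_nonzero nonzero(1) assms(1) by auto
  show "p \<in> Z2 \<alpha> \<Longrightarrow> p 4 = 1 \<and> p 2 = -1 \<and> p 1 \<noteq> 0 \<and> p 3 \<noteq> 0"
    unfolding Z2_def using root_nonzero nonzero(2) \<open>-2 \<noteq> 0\<close> by auto
  show "p \<in> Z3 \<Longrightarrow> p 4 = 1 \<and> p 3 = 0 \<and> p 1 \<noteq> 0"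
    unfolding Z3_def using root_nonzero \<open>-2 \<noteq> 0\<close> by auto
  show "p \<in> Z4 \<alpha> \<Longrightarrow> p 4 = 1 \<and> p 1 = 0 \<and> p 2 \<noteq> 0"
    unfolding Z4_def using assms(2) by auto
qed

lemma card_Zunion:
  fixes \<alpha> :: "'a::field"
  assumes alg_closed: "\<forall>q :: 'a poly. degree q \<noteq> 0 \<longrightarrow> (\<exists>x. poly q x = 0)"
    and two: "(2::'a) \<noteq> 0" and "\<alpha> \<noteq> 0" "1 + \<alpha> \<noteq> 0" "1 - \<alpha> \<noteq> 0"
  shows "card (Zunion \<alpha>) = 20"
proof -
  have "\<alpha>^2 \<noteq> 1" using assms(4,5) by (auto simp: power2_eq_1_iff)
  have card: "card (Z0 :: (nat \<Rightarrow> 'a) set) = 4" "card (Z1 \<alpha>) = 4" "card (Z2 \<alpha>) = 4"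
    "card (Z3 :: (nat \<Rightarrow> 'a) set) = 4" "card (Z4 \<alpha>) = 4"
    using card_Z1 card_Z2 card_Z3 card_Z4 assms \<open>\<alpha>^2 \<noteq> 1\<close> by (simp_all add: Z0_def pt_eq_iff)
  then have finite: "finite (Z0 :: (nat \<Rightarrow> 'a) set)" "finite (Z1 \<alpha>)" "finite (Z2 \<alpha>)"
    "finite (Z3 :: (nat \<Rightarrow> 'a) set)" "finite (Z4 \<alpha>)"
    by (simp_all add: card_ge_0_finite)
  have "(1::'a) \<noteq> -1" using two by (metis one_add_one add_eq_0_iff2)
  note coordinates = Z_coordinates[OF two assms(3-5)]
  have "Z0 \<inter> Z1 \<alpha> = {}" "(Z0 \<union> Z1 \<alpha>) \<inter> Z2 \<alpha> = {}" "(Z0 \<union> Z1 \<alpha> \<union> Z2 \<alpha>) \<inter> Z3 = {}"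
    "(Z0 \<union> Z1 \<alpha> \<union> Z2 \<alpha> \<union> Z3) \<inter> Z4 \<alpha> = {}"
    using \<open>1 \<noteq> -1\<close> by (auto dest!: coordinates)
  with card finite show ?thesis by (simp add: card_Un_disjoint)
qed

lemma Zunion_normalised:
  "p \<in> Zunion \<alpha> \<Longrightarrow> p 4 = 1 \<or> p \<in> {pt 1 0 0 0, pt 0 1 0 0, pt 0 0 1 0}"
  unfolding Z0_def Z1_def Z2_def Z3_def Z4_def by auto

lemma inj_on_proj_Zunion: "inj_on proj (Zunion \<alpha>)"
proof (rule inj_onI)
  fix p q assume p: "p \<in> Zunion \<alpha>" and q: "q \<in> Zunion \<alpha>" and "proj p = proj q"
  have "p \<in> proj p" unfolding proj_def by (rule CollectI, rule exI[of _ 1]) simp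
  then have "p \<in> proj q" using \<open>proj p = proj q\<close> by simp
  then obtain c where "c \<noteq> 0" and pc: "p = (\<lambda>i. c * q i)" unfolding proj_def by blast
  then have pc_at: "p k = c * q k" for k by simp
  show "p = q"
  proof (cases "q 4 = 1")
    case True
    then have "p 4 = c" using pc_at[of 4] by simp
    with \<open>c \<noteq> 0\<close> Zunion_normalised[OF p] have "c = 1" by auto
    then show ?thesis using pc by simp
  next
    case False
    with Zunion_normalised[OF q] have "q \<in> {pt 1 0 0 0, pt 0 1 0 0, pt 0 0 1 0}" by blast
    moreover from this have "p 4 = 0" using pc_at[of 4] by auto
    then have "p \<in> {pt 1 0 0 0, pt 0 1 0 0, pt 0 0 1 0}" using Zunion_normalised[OF p] by auto
    ultimately show ?thesis using pc_at[of 1] pc_at[of 2] pc_at[of 3] by auto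
  qed
qed

section \<open>Multiplicity one\<close>

lemma four_nonzero: "(2::'a::field) \<noteq> 0 \<Longrightarrow> (4::'a) \<noteq> 0"
  by (metis mult_eq_0_iff numeral_Bit0 mult_2_right)

lemma mult_oneI:
  assumes "\<And>e f g h. \<forall>R\<in>row_sets. dminor \<alpha> p (pt e f g h) R = 0 \<Longrightarrow>
    \<exists>c. pt e f g h = (\<lambda>i. c * p i)"
  shows "mult_one \<alpha> p"
  using assms unfolding mult_one_def by (auto simp: vecs4_iff)

lemma dminor_scale:
  fixes k :: "'a::field"
  assumes "k \<noteq> 0"
  shows "dminor \<alpha> (\<lambda>i. k * p i) v R = k ^ 4 * dminor \<alpha> p (\<lambda>i. v i / k) R"
proof -
  have linear: "(\<lambda>i. [:k * p i, v i:]) = (\<lambda>i. [:k:] * [:p i, v i / k:])"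
    using assms by (simp add: mult.commute)
  show ?thesis unfolding dminor_def linear minor4_scale by (simp add: poly_const_pow)
qed

lemma mult_one_scale:
  fixes k :: "'a::field"
  assumes "k \<noteq> 0" "mult_one \<alpha> p"
  shows "mult_one \<alpha> (\<lambda>i. k * p i)"
proof (rule mult_oneI)
  fix e f g h
  assume "\<forall>R\<in>row_sets. dminor \<alpha> (\<lambda>i. k * p i) (pt e f g h) R = 0"
  then have "\<forall>R\<in>row_sets. dminor \<alpha> p (\<lambda>i. pt e f g h i / k) R = 0"
    using assms(1) by (simp add: dminor_scale)
  moreover have "(\<lambda>i. pt e f g h i / k) \<in> vecs4"
    unfolding vecs4_iff pt_def by (intro exI[of _ "e / k"] exI[of _ "f / k"] exI[of _ "g / k"]
      exI[of _ "h / k"]) auto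
  ultimately obtain c where "(\<lambda>i. pt e f g h i / k) = (\<lambda>i. c * p i)"
    using assms(2) unfolding mult_one_def by blast
  then have "pt e f g h = (\<lambda>i. c * (k * p i))" using assms(1) by (auto simp: fun_eq_iff field_simps)
  then show "\<exists>c. pt e f g h = (\<lambda>i. c * (k * p i))" ..
qed

lemma mult_one_e1:
  fixes \<alpha> :: "'a::field"
  shows "mult_one \<alpha> (pt 1 0 0 0)"
proof (rule mult_oneI)
  fix e f g h assume "\<forall>R\<in>row_sets. dminor \<alpha> (pt 1 0 0 0) (pt e f g h) R = 0"
  then have "dminor \<alpha> (pt 1 0 0 0) (pt e f g h) {1,2,3,4} = 0"
    "dminor \<alpha> (pt 1 0 0 0) (pt e f g h) {1,3,4,5} = 0"
    "dminor \<alpha> (pt 1 0 0 0) (pt e f g h) {1,3,4,6} = 0"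
    by (simp_all add: ball_row_sets)
  then have "g = 0" "h = 0" "f = 0" unfolding dminor_explicit pt_apply by simp_all
  then show "\<exists>c. pt e f g h = (\<lambda>i. c * pt 1 0 0 0 i)" by (intro exI[of _ e]) (simp add: scale_pt)
qed

lemma mult_one_e2:
  fixes \<alpha> :: "'a::field"
  assumes "(2::'a) \<noteq> 0"
  shows "mult_one \<alpha> (pt 0 1 0 0)"
proof (rule mult_oneI)
  fix e f g h assume "\<forall>R\<in>row_sets. dminor \<alpha> (pt 0 1 0 0) (pt e f g h) R = 0"
  then have "dminor \<alpha> (pt 0 1 0 0) (pt e f g h) {1,2,4,5} = 0"
    "dminor \<alpha> (pt 0 1 0 0) (pt e f g h) {2,3,4,5} = 0"
    "dminor \<alpha> (pt 0 1 0 0) (pt e f g h) {2,4,5,6} = 0"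
    by (simp_all add: ball_row_sets)
  then have "g = 0" "h = 0" "e = 0" unfolding dminor_explicit pt_apply using assms by simp_all
  then show "\<exists>c. pt e f g h = (\<lambda>i. c * pt 0 1 0 0 i)" by (intro exI[of _ f]) (simp add: scale_pt)
qed

lemma mult_one_e3:
  fixes \<alpha> :: "'a::field"
  assumes "\<alpha> \<noteq> 0"
  shows "mult_one \<alpha> (pt 0 0 1 0)"
proof (rule mult_oneI)
  fix e f g h assume "\<forall>R\<in>row_sets. dminor \<alpha> (pt 0 0 1 0) (pt e f g h) R = 0"
  then have "dminor \<alpha> (pt 0 0 1 0) (pt e f g h) {1,2,3,5} = 0"
    "dminor \<alpha> (pt 0 0 1 0) (pt e f g h) {1,2,4,5} = 0"
    "dminor \<alpha> (pt 0 0 1 0) (pt e f g h) {1,2,5,6} = 0"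
    by (simp_all add: ball_row_sets)
  then have "e = 0" "f = 0" "h = 0" unfolding dminor_explicit pt_apply using assms by simp_all
  then show "\<exists>c. pt e f g h = (\<lambda>i. c * pt 0 0 1 0 i)" by (intro exI[of _ g]) (simp add: scale_pt)
qed

lemma mult_one_e4:
  fixes \<alpha> :: "'a::field"
  assumes "\<alpha> \<noteq> 0"
  shows "mult_one \<alpha> (pt 0 0 0 1)"
proof (rule mult_oneI)
  fix e f g h assume "\<forall>R\<in>row_sets. dminor \<alpha> (pt 0 0 0 1) (pt e f g h) R = 0"
  then have "dminor \<alpha> (pt 0 0 0 1) (pt e f g h) {1,3,5,6} = 0"
    "dminor \<alpha> (pt 0 0 0 1) (pt e f g h) {2,3,5,6} = 0"
    "dminor \<alpha> (pt 0 0 0 1) (pt e f g h) {3,4,5,6} = 0"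
    by (simp_all add: ball_row_sets)
  then have "e = 0" "f = 0" "g = 0" unfolding dminor_explicit pt_apply using assms by simp_all
  then show "\<exists>c. pt e f g h = (\<lambda>i. c * pt 0 0 0 1 i)" by (intro exI[of _ h]) (simp add: scale_pt)
qed

lemma mult_one_Z1:
  fixes \<alpha> :: "'a::field"
  assumes two: "(2::'a) \<noteq> 0" and "1 + \<alpha> \<noteq> 0" and s: "s^2 = -2 * (1 + \<alpha>)" and t: "t^2 = 2"
  shows "mult_one \<alpha> (pt s 1 t 1)"
proof (rule mult_oneI)
  fix e f g h
  assume "\<forall>R\<in>row_sets. dminor \<alpha> (pt s 1 t 1) (pt e f g h) R = 0"
  then have "dminor \<alpha> (pt s 1 t 1) (pt e f g h) {1,2,3,6} = 0"
    "dminor \<alpha> (pt s 1 t 1) (pt e f g h) {1,2,3,5} = 0"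
    "dminor \<alpha> (pt s 1 t 1) (pt e f g h) {1,2,3,4} = 0"
    by (simp_all add: ball_row_sets)
  note eqs = this[unfolded dminor_explicit pt_apply power_one mult_1_left mult_1_right]
  have "s \<noteq> 0" using s neg_two_times_nonzero[OF two \<open>1 + \<alpha> \<noteq> 0\<close>] by auto
  have "t \<noteq> 0" using t two by auto
  have "2 * (s * (t * (f - h))) = 0" using eqs(1) by algebra
  then have "h = f" using two \<open>s \<noteq> 0\<close> \<open>t \<noteq> 0\<close> by simp
  have "2 * (2 * (s * (t * f - g))) = 0" using eqs(2) \<open>h = f\<close> t by algebra
  then have "g = t * f" using four_nonzero[OF two] \<open>s \<noteq> 0\<close> by simp
  have "2 * (2 * ((1 + \<alpha>) * (t * (e - s * f)))) = 0" using eqs(3) \<open>g = t * f\<close> s t by algebra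
  then have "e = s * f" using four_nonzero[OF two] \<open>1 + \<alpha> \<noteq> 0\<close> \<open>t \<noteq> 0\<close> by simp
  show "\<exists>c. pt e f g h = (\<lambda>i. c * pt s 1 t 1 i)"
    using \<open>h = f\<close> \<open>g = t * f\<close> \<open>e = s * f\<close> by (intro exI[of _ f]) (simp add: scale_pt mult.commute)
qed

lemma mult_one_Z2:
  fixes \<alpha> :: "'a::field"
  assumes two: "(2::'a) \<noteq> 0" and "1 - \<alpha> \<noteq> 0" and s: "s^2 = -2 * (1 - \<alpha>)" and t: "t^2 = -2"
  shows "mult_one \<alpha> (pt s (-1) t 1)"
proof (rule mult_oneI)
  fix e f g h
  assume "\<forall>R\<in>row_sets. dminor \<alpha> (pt s (-1) t 1) (pt e f g h) R = 0"
  then have "dminor \<alpha> (pt s (-1) t 1) (pt e f g h) {1,2,3,6} = 0"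
    "dminor \<alpha> (pt s (-1) t 1) (pt e f g h) {1,2,3,5} = 0"
    "dminor \<alpha> (pt s (-1) t 1) (pt e f g h) {1,2,3,4} = 0"
    by (simp_all add: ball_row_sets)
  note eqs = this[unfolded dminor_explicit pt_apply power_one mult_1_left mult_1_right]
  have "s \<noteq> 0" using s neg_two_times_nonzero[OF two \<open>1 - \<alpha> \<noteq> 0\<close>] by auto
  have "t \<noteq> 0" using t two by auto
  have "2 * (s * (t * (f + h))) = 0" using eqs(1) by algebra
  then have "f = -h" using two \<open>s \<noteq> 0\<close> \<open>t \<noteq> 0\<close> by (simp add: eq_neg_iff_add_eq_0)
  have "2 * (2 * (s * (t * f + g))) = 0" using eqs(2) \<open>f = -h\<close> t by algebra
  then have "g = -(t * f)"
    using four_nonzero[OF two] \<open>s \<noteq> 0\<close> by (simp add: eq_neg_iff_add_eq_0 add.commute)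
  have "2 * (2 * ((1 - \<alpha>) * (t * (e - s * h)))) = 0"
    using eqs(3) \<open>g = -(t * f)\<close> \<open>f = -h\<close> s t by algebra
  then have "e = s * h" using four_nonzero[OF two] \<open>1 - \<alpha> \<noteq> 0\<close> \<open>t \<noteq> 0\<close> by simp
  show "\<exists>c. pt e f g h = (\<lambda>i. c * pt s (-1) t 1 i)"
    using \<open>f = -h\<close> \<open>g = -(t * f)\<close> \<open>e = s * h\<close>
    by (intro exI[of _ h]) (simp add: scale_pt mult.commute)
qed

lemma mult_one_Z3:
  fixes \<alpha> :: "'a::field"
  assumes two: "(2::'a) \<noteq> 0" and s: "s^2 = -2" and u: "u^2 = -1"
  shows "mult_one \<alpha> (pt s u 0 1)"
proof (rule mult_oneI)
  fix e f g h
  assume "\<forall>R\<in>row_sets. dminor \<alpha> (pt s u 0 1) (pt e f g h) R = 0"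
  then have "dminor \<alpha> (pt s u 0 1) (pt e f g h) {1,2,3,4} = 0"
    "dminor \<alpha> (pt s u 0 1) (pt e f g h) {1,4,5,6} = 0"
    "dminor \<alpha> (pt s u 0 1) (pt e f g h) {1,3,4,5} = 0"
    by (simp_all add: ball_row_sets)
  note eqs = this[unfolded dminor_explicit pt_apply power_one mult_1_left mult_1_right
      power_zero_numeral mult_zero_left mult_zero_right add_0_left add_0_right diff_zero diff_0]
  have "s \<noteq> 0" using s two by auto
  have "2 * (2 * (s * g)) = 0" using eqs(1) s u by algebra
  then have "g = 0" using four_nonzero[OF two] \<open>s \<noteq> 0\<close> by simp
  have "2 * (2 * (u * f + h)) = 0" using eqs(2) s u by algebra
  then have "u * f + h = 0" using two by (metis mult_eq_0_iff)
  then have "f = u * h" using u by algebra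
  have "2 * (2 * (e + s * u * f)) = 0" using eqs(3) s u by algebra
  then have "e + s * u * f = 0" using two by (metis mult_eq_0_iff)
  then have "e = s * h" using u \<open>f = u * h\<close> by algebra
  show "\<exists>c. pt e f g h = (\<lambda>i. c * pt s u 0 1 i)"
    using \<open>g = 0\<close> \<open>f = u * h\<close> \<open>e = s * h\<close> by (intro exI[of _ h]) (simp add: scale_pt mult.commute)
qed

lemma reciprocal_quadratic_root_nonzero:
  fixes \<alpha> :: "'a::field"
  assumes two: "(2::'a) \<noteq> 0" and "\<alpha> \<noteq> 0" "\<alpha>^2 \<noteq> 1" and b: "\<alpha> * b^2 + 2 * b + \<alpha> = 0"
  shows "b \<noteq> 0" "b^2 \<noteq> 1" "\<alpha> * b + 1 \<noteq> 0"
proof -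
  show "b \<noteq> 0" using b \<open>\<alpha> \<noteq> 0\<close> by auto
  show "b^2 \<noteq> 1"
  proof
    assume "b^2 = 1"
    then have "2 * (\<alpha> + b) = 0" using b by algebra
    then have "\<alpha> = -b" using two by (metis mult_eq_0_iff eq_neg_iff_add_eq_0)
    then have "\<alpha>^2 = b^2" by simp
    with \<open>b^2 = 1\<close> \<open>\<alpha>^2 \<noteq> 1\<close> show False by simp
  qed
  show "\<alpha> * b + 1 \<noteq> 0"
  proof
    assume "\<alpha> * b + 1 = 0"
    then have "\<alpha> + b = 0" using b by algebra
    with \<open>\<alpha> * b + 1 = 0\<close> have "\<alpha>^2 = 1" by algebra
    with \<open>\<alpha>^2 \<noteq> 1\<close> show False ..
  qed
qed

lemma mult_one_Z4:
  fixes \<alpha> :: "'a::field"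
  assumes two: "(2::'a) \<noteq> 0" and "\<alpha> \<noteq> 0" "\<alpha>^2 \<noteq> 1"
    and b: "\<alpha> * b^2 + 2 * b + \<alpha> = 0" and c: "\<alpha> * c^2 = -2 * b^2"
  shows "mult_one \<alpha> (pt 0 b c 1)"
proof (rule mult_oneI)
  fix e f g h
  assume "\<forall>R\<in>row_sets. dminor \<alpha> (pt 0 b c 1) (pt e f g h) R = 0"
  then have "dminor \<alpha> (pt 0 b c 1) (pt e f g h) {1,2,3,6} = 0"
    "dminor \<alpha> (pt 0 b c 1) (pt e f g h) {1,2,4,5} = 0"
    "dminor \<alpha> (pt 0 b c 1) (pt e f g h) {1,4,5,6} = 0"
    by (simp_all add: ball_row_sets)
  note eqs = this[unfolded dminor_explicit pt_apply power_one mult_1_left mult_1_right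
      power_zero_numeral mult_zero_left mult_zero_right add_0_left add_0_right diff_zero diff_0]
  note root = reciprocal_quadratic_root_nonzero[OF two assms(2,3) b]
  have "c \<noteq> 0" using c root(1) \<open>\<alpha> \<noteq> 0\<close> two by auto
  have "c * ((b^2 - 1) * e) = 0" using eqs(1) by algebra
  then have "e = 0" using \<open>c \<noteq> 0\<close> root(2) by simp
  have "2 * (2 * (b^2 * (b * g - c * f))) = 0" using eqs(2) c \<open>e = 0\<close> by algebra
  then have "b * g = c * f" using four_nonzero[OF two] root(1) by simp
  have "2 * (c^2 * ((\<alpha> * b + 1) * f + (\<alpha> + b) * h)) = 0" using eqs(3) \<open>e = 0\<close> b by algebra
  then have "(\<alpha> * b + 1) * f + (\<alpha> + b) * h = 0" using two \<open>c \<noteq> 0\<close> by simp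
  then have "(\<alpha> * b + 1) * (f - b * h) = 0" using b by algebra
  then have "f = b * h" using root(3) by simp
  with \<open>b * g = c * f\<close> have "b * (g - c * h) = 0" by algebra
  then have "g = c * h" using root(1) by simp
  show "\<exists>c'. pt e f g h = (\<lambda>i. c' * pt 0 b c 1 i)"
    using \<open>e = 0\<close> \<open>f = b * h\<close> \<open>g = c * h\<close> by (intro exI[of _ h]) (simp add: scale_pt mult.commute)
qed

lemma mult_one_Zunion:
  fixes \<alpha> :: "'a::field"
  assumes two: "(2::'a) \<noteq> 0" and "\<alpha> \<noteq> 0" "1 + \<alpha> \<noteq> 0" "1 - \<alpha> \<noteq> 0"
    and "p \<in> Zunion \<alpha>"
  shows "mult_one \<alpha> p"
proof -
  from \<open>p \<in> Zunion \<alpha>\<close> consider "p \<in> Z0"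
    | s t where "p = pt s 1 t 1" "s^2 = -2 * (1 + \<alpha>)" "t^2 = 2"
    | s t where "p = pt s (-1) t 1" "s^2 = -2 * (1 - \<alpha>)" "t^2 = -2"
    | s u where "p = pt s u 0 1" "s^2 = -2" "u^2 = -1"
    | b c where "p = pt 0 b c 1" "\<alpha> * b^2 + 2 * b + \<alpha> = 0" "\<alpha> * c^2 = -2 * b^2"
    unfolding Z1_def Z2_def Z3_def Z4_def by blast
  then show ?thesis
  proof cases
    case 1
    then show ?thesis
      using mult_one_e1 mult_one_e2[OF two] mult_one_e3 mult_one_e4 assms(2) unfolding Z0_def
      by blast
  next
    case 2
    then show ?thesis using mult_one_Z1[OF two assms(3)] by simp
  next
    case 3
    then show ?thesis using mult_one_Z2[OF two assms(4)] by simp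
  next
    case 4
    then show ?thesis using mult_one_Z3[OF two] by simp
  next
    case 5
    have "\<alpha>^2 \<noteq> 1" using assms(3,4) by (auto simp: power2_eq_1_iff)
    with 5 show ?thesis using mult_one_Z4[OF two assms(2)] by simp
  qed
qed

lemma mult_one_plocus:
  fixes \<alpha> :: "'a::field"
  assumes two: "(2::'a) \<noteq> 0" and "\<alpha> \<noteq> 0" "1 + \<alpha> \<noteq> 0" "1 - \<alpha> \<noteq> 0"
    and "p \<in> plocus \<alpha>"
  shows "mult_one \<alpha> p"
proof -
  obtain k q where "k \<noteq> 0" "q \<in> Zunion \<alpha>" "p = (\<lambda>i. k * q i)"
    using plocus_normal_form[OF \<open>p \<in> plocus \<alpha>\<close> \<open>\<alpha> \<noteq> 0\<close> two] .
  then show ?thesis using mult_one_scale mult_one_Zunion[OF assms(1-4)] by metis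
qed

theorem proposition2p2:
  fixes \<alpha> :: "'a::field"
  assumes alg_closed: "\<forall>q :: 'a poly. degree q \<noteq> 0 \<longrightarrow> (\<exists>x. poly q x = 0)"
    and char_not_2: "(2::'a) \<noteq> 0"
    and alpha: "\<alpha> * (1 - \<alpha>^2) \<noteq> 0"
  shows "proj ` plocus \<alpha> = proj ` (Z0 \<union> Z1 \<alpha> \<union> Z2 \<alpha> \<union> Z3 \<union> Z4 \<alpha>)
         \<and> card (proj ` plocus \<alpha>) = 20
         \<and> (\<forall>p \<in> plocus \<alpha>. mult_one \<alpha> p)"
proof -
  have "1 - \<alpha>^2 = (1 + \<alpha>) * (1 - \<alpha>)" by algebra
  then have "\<alpha> \<noteq> 0" "1 + \<alpha> \<noteq> 0" "1 - \<alpha> \<noteq> 0" using alpha by auto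
  note nondegenerate = char_not_2 this
  have "proj ` plocus \<alpha> = proj ` Zunion \<alpha>"
    using proj_plocus_eq \<open>\<alpha> \<noteq> 0\<close> char_not_2 by blast
  moreover have "card (proj ` Zunion \<alpha>) = 20"
    using card_image[OF inj_on_proj_Zunion[of \<alpha>]] card_Zunion[OF alg_closed nondegenerate] by simp
  moreover have "\<forall>p \<in> plocus \<alpha>. mult_one \<alpha> p"
    using mult_one_plocus[OF nondegenerate] by blast
  ultimately show ?thesis by simp
qed

end
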